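(* Let $G$ be a cop-win graph of corner rank $\alpha\ge2$. No vertex of corner rank $\alpha-1$ is adjacent to every vertex of corner rank $\alpha-1$.
   Context: All graphs are finite, nonempty, and reflexive (every vertex has a loop, so each vertex is adjacent to itself). $N[v]$ is the closed neighborhood of $v$ (including $v$). For distinct $v,w$, $w$ strictly corners $v$ if $N[v]\subsetneq N[w]$; $v$ is then a strict corner. Corner ranking: set $G^{(1)}=G$, $k=1$. If $G^{(k)}$ is a clique, give all its vertices rank $k$ and stop. Else if $G^{(k)}$ has no strict corners, give all its vertices rank $\infty$ and stop. Else give every strict corner of $G^{(k)}$ rank $k$, delete them to get $G^{(k+1)}$ (induced subgraph), increase $k$ and repeat. The corner rank of $G$ is the largest rank of a vertex; cop-win graphs are exactly those of finite corner rank. *)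

theory Defs
  imports Main "HOL-Library.Extended_Nat"
begin

definition reflexive_graph :: "'a set \<Rightarrow> ('a \<Rightarrow> 'a \<Rightarrow> bool) \<Rightarrow> bool" where
  "reflexive_graph V E \<longleftrightarrow> finite V \<and> V \<noteq> {} \<and> (\<forall>v\<in>V. E v v)
     \<and> (\<forall>v\<in>V. \<forall>w\<in>V. E v w \<longleftrightarrow> E w v)"

definition closed_nbhd :: "('a \<Rightarrow> 'a \<Rightarrow> bool) \<Rightarrow> 'a set \<Rightarrow> 'a \<Rightarrow> 'a set" where
  "closed_nbhd E S v = {w \<in> S. E v w}"

definition strict_corners :: "('a \<Rightarrow> 'a \<Rightarrow> bool) \<Rightarrow> 'a set \<Rightarrow> 'a set" where
  "strict_corners E S = {v \<in> S. \<exists>w\<in>S. w \<noteq> v \<and> closed_nbhd E S v \<subset> closed_nbhd E S w}"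

definition is_clique :: "('a \<Rightarrow> 'a \<Rightarrow> bool) \<Rightarrow> 'a set \<Rightarrow> bool" where
  "is_clique E S \<longleftrightarrow> (\<forall>u\<in>S. \<forall>w\<in>S. E u w)"

text \<open>corner_stage V E k is G^(k+1) (0-indexed).  Once a stage is a clique or has
  no strict corners, it stays constant, so we may iterate unconditionally.\<close>
fun corner_stage :: "'a set \<Rightarrow> ('a \<Rightarrow> 'a \<Rightarrow> bool) \<Rightarrow> nat \<Rightarrow> 'a set" where
  "corner_stage V E 0 = V"
| "corner_stage V E (Suc k) = corner_stage V E k - strict_corners E (corner_stage V E k)"

definition assigned_at :: "'a set \<Rightarrow> ('a \<Rightarrow> 'a \<Rightarrow> bool) \<Rightarrow> 'a \<Rightarrow> nat \<Rightarrow> bool" where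
  "assigned_at V E v k \<longleftrightarrow>
     (if is_clique E (corner_stage V E k) then v \<in> corner_stage V E k
      else v \<in> strict_corners E (corner_stage V E k))"

definition corner_rank_of :: "'a set \<Rightarrow> ('a \<Rightarrow> 'a \<Rightarrow> bool) \<Rightarrow> 'a \<Rightarrow> enat" where
  "corner_rank_of V E v =
     (if \<exists>k. assigned_at V E v k then enat (Suc (LEAST k. assigned_at V E v k)) else \<infinity>)"

definition corner_rank :: "'a set \<Rightarrow> ('a \<Rightarrow> 'a \<Rightarrow> bool) \<Rightarrow> enat" where
  "corner_rank V E = Max (corner_rank_of V E ` V)"

definition cop_win :: "'a set \<Rightarrow> ('a \<Rightarrow> 'a \<Rightarrow> bool) \<Rightarrow> bool" where
  "cop_win V E \<longleftrightarrow> corner_rank V E \<noteq> \<infinity>"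

end

theory Submission
  imports Defs
begin

text \<open>Write \<open>\<alpha> = k + 2\<close>. The \<open>(k+1)\<close>-st stage of the ranking is not a clique, its strict
  corners are exactly the vertices of rank \<open>\<alpha> - 1\<close>, and deleting them leaves a clique.
  Suppose a strict corner \<open>v\<close> of that stage were adjacent to all its strict corners.
  A maximal strict dominator \<open>u\<close> of \<open>v\<close> is not a corner, so it is adjacent to all
  non-corners (clique) and to all corners (through \<open>N[v] \<subset> N[u]\<close>); thus \<open>N[u]\<close> is the
  whole stage. Every non-corner \<open>z\<close> then has \<open>N[z] = N[u]\<close>, hence is adjacent to \<open>v\<close>,
  so \<open>N[v]\<close> is the whole stage as well, contradicting \<open>N[v] \<subset> N[u]\<close>.\<close>

lemma corner_stage_antimono: "j \<le> k \<Longrightarrow> corner_stage V E k \<subseteq> corner_stage V E j"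
  by (induction k rule: dec_induct) auto

lemma corner_stage_subset: "corner_stage V E k \<subseteq> V"
  using corner_stage_antimono[of 0 k V E] by simp

lemma strict_corners_subset: "strict_corners E S \<subseteq> S"
  unfolding strict_corners_def by auto

lemma strict_corner_dominated_by_non_corner:
  assumes "finite S" "v \<in> strict_corners E S"
  obtains u where "u \<in> S - strict_corners E S"
    and "closed_nbhd E S v \<subset> closed_nbhd E S u"
proof -
  let ?N = "closed_nbhd E S"
  define D where "D = {u \<in> S. ?N v \<subset> ?N u}"
  have "finite (?N ` D)" "?N ` D \<noteq> {}"
    using assms unfolding D_def strict_corners_def by auto
  then obtain M where "M \<in> ?N ` D" and maximal: "\<forall>M'\<in>?N ` D. M \<subseteq> M' \<longrightarrow> M = M'"
    using finite_has_maximal by meson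
  then obtain u where uD: "u \<in> D" and "M = ?N u"
    by blast
  have "u \<notin> strict_corners E S"
  proof
    assume "u \<in> strict_corners E S"
    then obtain w where "w \<in> S" "?N u \<subset> ?N w"
      unfolding strict_corners_def by auto
    moreover from this uD have "w \<in> D"
      unfolding D_def by auto
    ultimately show False
      using maximal \<open>M = ?N u\<close> by blast
  qed
  with uD show thesis
    using that unfolding D_def by blast
qed

lemma no_strict_corner_adjacent_to_all_strict_corners:
  assumes "finite S"
    and sym: "\<And>x y. x \<in> S \<Longrightarrow> y \<in> S \<Longrightarrow> E x y \<longleftrightarrow> E y x"
    and clique: "is_clique E (S - strict_corners E S)"
    and v: "v \<in> strict_corners E S"
    and adj: "\<And>z. z \<in> strict_corners E S \<Longrightarrow> E v z"
  shows False
proof -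
  let ?N = "closed_nbhd E S"
  obtain u where u: "u \<in> S - strict_corners E S" and vu: "?N v \<subset> ?N u"
    using strict_corner_dominated_by_non_corner[OF \<open>finite S\<close> v] .
  have vS: "v \<in> S"
    using v strict_corners_subset[of E S] by blast
  have Nu: "?N u = S"
  proof -
    have "z \<in> ?N u" if "z \<in> S" for z
    proof (cases "z \<in> strict_corners E S")
      case True
      then have "z \<in> ?N v"
        using adj \<open>z \<in> S\<close> unfolding closed_nbhd_def by simp
      with vu show ?thesis by blast
    next
      case False
      with u \<open>z \<in> S\<close> clique show ?thesis
        unfolding is_clique_def closed_nbhd_def by auto
    qed
    then show ?thesis
      unfolding closed_nbhd_def by auto
  qed
  have "z \<in> ?N v" if zS: "z \<in> S" for z
  proof (cases "z \<in> strict_corners E S")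
    case True
    with adj zS show ?thesis
      unfolding closed_nbhd_def by simp
  next
    case False
    have "?N z \<subseteq> ?N u"
      using Nu unfolding closed_nbhd_def by auto
    moreover have "\<not> ?N z \<subset> ?N u"
    proof
      assume "?N z \<subset> ?N u"
      moreover from this have "z \<noteq> u"
        by blast
      ultimately have "z \<in> strict_corners E S"
        using zS u unfolding strict_corners_def by (simp add: bexI[of _ u])
      with False show False
        by contradiction
    qed
    ultimately have "?N z = ?N u"
      by blast
    then have "E z v"
      using Nu vS unfolding closed_nbhd_def by auto
    with sym zS vS show ?thesis
      unfolding closed_nbhd_def by simp
  qed
  then have "?N v = S"
    unfolding closed_nbhd_def by auto
  with Nu vu show False
    by simp
qed

lemma corner_rank_of_eq_enat_Suc_iff:
  "corner_rank_of V E z = enat (Suc m) \<longleftrightarrow>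
     assigned_at V E z m \<and> (\<forall>j<m. \<not> assigned_at V E z j)"
proof
  assume rank: "corner_rank_of V E z = enat (Suc m)"
  then have ex: "\<exists>j. assigned_at V E z j"
    unfolding corner_rank_of_def by (auto split: if_splits)
  with rank have "(LEAST j. assigned_at V E z j) = m"
    unfolding corner_rank_of_def by simp
  with LeastI_ex[OF ex] not_less_Least[of _ "assigned_at V E z"]
  show "assigned_at V E z m \<and> (\<forall>j<m. \<not> assigned_at V E z j)"
    by simp
next
  assume least: "assigned_at V E z m \<and> (\<forall>j<m. \<not> assigned_at V E z j)"
  then have "(LEAST j. assigned_at V E z j) = m"
    by (intro Least_equality) (auto simp: not_less)
  with least show "corner_rank_of V E z = enat (Suc m)"
    unfolding corner_rank_of_def by auto
qed

lemma corner_rank_of_finiteE: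
  assumes "corner_rank_of V E z \<noteq> \<infinity>"
  obtains m where "corner_rank_of V E z = enat (Suc m)"
proof -
  from assms have "\<exists>k. assigned_at V E z k"
    unfolding corner_rank_of_def by (auto split: if_splits)
  then show thesis
    using that[of "LEAST k. assigned_at V E z k"] unfolding corner_rank_of_def by simp
qed

lemma assigned_at_imp_mem_corner_stage: "assigned_at V E z m \<Longrightarrow> z \<in> corner_stage V E m"
  using strict_corners_subset[of E "corner_stage V E m"]
  unfolding assigned_at_def by (auto split: if_splits)

lemma not_assigned_at_before_stage:
  assumes "\<forall>j<m. \<not> is_clique E (corner_stage V E j)" "z \<in> corner_stage V E m" "j < m"
  shows "\<not> assigned_at V E z j"
proof -
  have "z \<in> corner_stage V E (Suc j)"
    using assms(2,3) corner_stage_antimono[of "Suc j" m V E] by auto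
  with assms(1,3) show ?thesis
    unfolding assigned_at_def by simp
qed

lemma corner_rank_of_eq_iff_strict_corner:
  assumes "\<forall>j<Suc k. \<not> is_clique E (corner_stage V E j)"
  shows "corner_rank_of V E z = enat (Suc k) \<longleftrightarrow> z \<in> strict_corners E (corner_stage V E k)"
proof
  assume "corner_rank_of V E z = enat (Suc k)"
  with assms show "z \<in> strict_corners E (corner_stage V E k)"
    unfolding corner_rank_of_eq_enat_Suc_iff assigned_at_def by simp
next
  assume corner: "z \<in> strict_corners E (corner_stage V E k)"
  then have "z \<in> corner_stage V E k"
    using strict_corners_subset[of E "corner_stage V E k"] by blast
  with corner assms show "corner_rank_of V E z = enat (Suc k)"
    unfolding corner_rank_of_eq_enat_Suc_iff
    using not_assigned_at_before_stage[of k E V z] by (simp add: assigned_at_def)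
qed

lemma corner_stages_of_corner_rank:
  assumes graph: "reflexive_graph V E" and rank: "corner_rank V E = enat (Suc (Suc k))"
  shows "\<forall>j<Suc k. \<not> is_clique E (corner_stage V E j)"
    and "is_clique E (corner_stage V E (Suc k))"
proof -
  let ?S = "corner_stage V E"
  have finV: "finite V" and "V \<noteq> {}"
    using graph unfolding reflexive_graph_def by auto
  then have "corner_rank V E \<in> corner_rank_of V E ` V"
    unfolding corner_rank_def by (intro Max_in) auto
  then obtain x where "x \<in> V" and "corner_rank_of V E x = enat (Suc (Suc k))"
    using rank by auto
  then have x_assigned: "assigned_at V E x (Suc k)"
    and x_not_earlier: "\<forall>j<Suc k. \<not> assigned_at V E x j"
    unfolding corner_rank_of_eq_enat_Suc_iff by auto
  have xS: "x \<in> ?S (Suc k)"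
    using assigned_at_imp_mem_corner_stage[OF x_assigned] .
  show no_clique: "\<forall>j<Suc k. \<not> is_clique E (?S j)"
  proof (intro allI impI notI)
    fix j assume "j < Suc k" "is_clique E (?S j)"
    moreover from \<open>j < Suc k\<close> xS have "x \<in> ?S j"
      using corner_stage_antimono[of j "Suc k" V E] by auto
    ultimately show False
      using x_not_earlier unfolding assigned_at_def by auto
  qed
  have rank_le: "corner_rank_of V E y \<le> enat (Suc (Suc k))" if "y \<in> V" for y
  proof -
    have "corner_rank_of V E y \<le> Max (corner_rank_of V E ` V)"
      using finV that by (intro Max_ge) auto
    with rank show ?thesis
      unfolding corner_rank_def by simp
  qed
  show "is_clique E (?S (Suc k))"
  proof (rule ccontr)
    assume not_clique: "\<not> is_clique E (?S (Suc k))"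
    have all_corners: "y \<in> strict_corners E (?S (Suc k))" if yS: "y \<in> ?S (Suc k)" for y
    proof -
      have yV: "y \<in> V"
        using yS corner_stage_subset[of V E "Suc k"] by blast
      then have "corner_rank_of V E y \<noteq> \<infinity>"
        using rank_le[OF yV] by (cases "corner_rank_of V E y") simp_all
      then obtain m where m: "corner_rank_of V E y = enat (Suc m)"
        by (rule corner_rank_of_finiteE)
      with rank_le[OF yV] have "m \<le> Suc k"
        by simp
      moreover from m have "assigned_at V E y m"
        unfolding corner_rank_of_eq_enat_Suc_iff by simp
      moreover from this have "\<not> m < Suc k"
        using not_assigned_at_before_stage[OF no_clique yS] by blast
      ultimately show ?thesis
        using not_clique unfolding assigned_at_def by (simp add: not_less)
    qed
    have "finite (?S (Suc k))"
      using finite_subset[OF corner_stage_subset finV] .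
    then obtain u where "u \<in> ?S (Suc k) - strict_corners E (?S (Suc k))"
      and "closed_nbhd E (?S (Suc k)) x \<subset> closed_nbhd E (?S (Suc k)) u"
      using strict_corner_dominated_by_non_corner[OF _ all_corners[OF xS]] by blast
    with all_corners show False
      by blast
  qed
qed

theorem lemma3p18:
  fixes V :: "'a set" and E :: "'a \<Rightarrow> 'a \<Rightarrow> bool" and \<alpha> :: nat
  assumes "reflexive_graph V E"
    and "cop_win V E"
    and "corner_rank V E = enat \<alpha>"
    and "\<alpha> \<ge> 2"
  shows "\<not> (\<exists>v\<in>V. corner_rank_of V E v = enat (\<alpha> - 1) \<and>
            (\<forall>w\<in>V. corner_rank_of V E w = enat (\<alpha> - 1) \<longrightarrow> E v w))"
proof
  \<comment> \<open>\<open>cop_win V E\<close> is implied by the finite corner rank and not needed.\<close>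
  obtain k where \<alpha>: "\<alpha> = Suc (Suc k)"
    using \<open>\<alpha> \<ge> 2\<close> by (metis add_2_eq_Suc le_Suc_ex)
  let ?S = "corner_stage V E k"
  have rank: "corner_rank V E = enat (Suc (Suc k))"
    using assms(3) \<alpha> by simp
  note rank_iff = corner_rank_of_eq_iff_strict_corner[OF corner_stages_of_corner_rank(1)[OF assms(1) rank]]
  assume "\<exists>v\<in>V. corner_rank_of V E v = enat (\<alpha> - 1) \<and>
            (\<forall>w\<in>V. corner_rank_of V E w = enat (\<alpha> - 1) \<longrightarrow> E v w)"
  then obtain v where "corner_rank_of V E v = enat (Suc k)"
    and adj: "\<And>w. w \<in> V \<Longrightarrow> corner_rank_of V E w = enat (Suc k) \<Longrightarrow> E v w"
    using \<alpha> by auto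
  then have "v \<in> strict_corners E ?S"
    using rank_iff by blast
  moreover have "E v z" if "z \<in> strict_corners E ?S" for z
  proof -
    have "z \<in> V"
      using that strict_corners_subset[of E ?S] corner_stage_subset[of V E k] by blast
    with that show ?thesis
      using adj rank_iff by blast
  qed
  moreover have "is_clique E (?S - strict_corners E ?S)"
    using corner_stages_of_corner_rank(2)[OF assms(1) rank] by simp
  moreover have "finite ?S"
    using assms(1) finite_subset[OF corner_stage_subset] unfolding reflexive_graph_def by blast
  moreover have "E x y \<longleftrightarrow> E y x" if "x \<in> ?S" "y \<in> ?S" for x y
    using assms(1) that corner_stage_subset[of V E k] unfolding reflexive_graph_def by blast
  ultimately show False
    using no_strict_corner_adjacent_to_all_strict_corners[of ?S E v] by blast
qed

end
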